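(* Fix a trade-off function $f$ and $\alpha\in(0,1)$. Let $D_{n+1}=((X_i,Y_i))_{i=1}^{n+1}$ consist of i.i.d. data points from a distribution $P$ on $\mathcal X\times\mathcal Y$ and let $D_n=((X_i,Y_i))_{i=1}^n$. Let $M$ be any $f$-DP mechanism (with respect to add/remove-one adjacency) and $C(\cdot,\cdot)$ any prediction-set map, sending a mechanism output and a point $x\in\mathcal X$ to a measurable subset of $\mathcal Y$. If $\mathbb P\big(Y_{n+1}\in C(M(D_{n+1}),X_{n+1})\big)\ge 1-\alpha$, then $\mathbb P\big(Y_{n+1}\in C(M(D_n),X_{n+1})\big)\ge f(\alpha)$. Probabilities are over the data and the randomness of $M$ (which is independent of the data).
   Context: Trade-off function: for distributions $P,Q$, $T(P,Q)(\alpha)=\inf_\phi\{1-\mathbb E_Q[\phi]:\mathbb E_P[\phi]\le\alpha\}$ over measurable tests $\phi$ with values in $[0,1]$. A function $f:[0,1]\to[0,1]$ is a trade-off function if it is convex, continuous, non-increasing and $f(\alpha)\le 1-\alpha$. A mechanism $M$ is $f$-DP if $T(M(D),M(D'))\ge f$ pointwise for all datasets $D,D'$ differing by the addition or removal of one entry. *)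

theory Defs
  imports "HOL-Probability.Probability"
begin

definition tradeoff :: "'a measure \<Rightarrow> 'a measure \<Rightarrow> real \<Rightarrow> real" where
  "tradeoff P Q \<alpha> = Inf ((\<lambda>\<phi>. 1 - (\<integral>x. \<phi> x \<partial>Q)) `
      {\<phi> \<in> borel_measurable P. (\<forall>x\<in>space P. 0 \<le> \<phi> x \<and> \<phi> x \<le> 1) \<and> (\<integral>x. \<phi> x \<partial>P) \<le> \<alpha>})"

definition is_tradeoff_fun :: "(real \<Rightarrow> real) \<Rightarrow> bool" where
  "is_tradeoff_fun f \<longleftrightarrow>
     (\<forall>a\<in>{0..1}. 0 \<le> f a \<and> f a \<le> 1) \<and>
     convex_on {0..1} f \<and> continuous_on {0..1} f \<and>
     (\<forall>a\<in>{0..1}. \<forall>b\<in>{0..1}. a \<le> b \<longrightarrow> f b \<le> f a) \<and>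
     (\<forall>a\<in>{0..1}. f a \<le> 1 - a)"

definition remove_one :: "'z list \<Rightarrow> 'z list \<Rightarrow> bool" where
  "remove_one D D' \<longleftrightarrow> (\<exists>i<length D. D' = take i D @ drop (Suc i) D)"

definition adjacent :: "'z list \<Rightarrow> 'z list \<Rightarrow> bool" where
  "adjacent D D' \<longleftrightarrow> remove_one D D' \<or> remove_one D' D"

definition f_DP :: "'z measure \<Rightarrow> (real \<Rightarrow> real) \<Rightarrow> ('z list \<Rightarrow> 'o measure) \<Rightarrow> bool" where
  "f_DP Z f M \<longleftrightarrow>
     (\<forall>D D'. set D \<subseteq> space Z \<longrightarrow> set D' \<subseteq> space Z \<longrightarrow> adjacent D D' \<longrightarrow>
        (\<forall>a\<in>{0..1}. f a \<le> tradeoff (M D) (M D') a))"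

text \<open>Coverage probability P(Y_{n+1} \<in> C(M(D_k), X_{n+1})) where the data
  omega_0,...,omega_n are i.i.d. from P, D_k = (omega_0,...,omega_{k-1}) and the test
  point is omega_n; the mechanism's randomness is independent of the data, so we
  integrate the conditional probability over the data.\<close>
definition coverage ::
  "('x \<times> 'y) measure \<Rightarrow> (('x \<times> 'y) list \<Rightarrow> 'o measure) \<Rightarrow> ('o \<Rightarrow> 'x \<Rightarrow> 'y set) \<Rightarrow> nat \<Rightarrow> nat \<Rightarrow> real" where
  "coverage P M C n k = (\<integral>\<omega>. measure (M (map \<omega> [0..<k]))
       {r \<in> space (M (map \<omega> [0..<k])). snd (\<omega> n) \<in> C r (fst (\<omega> n))}
     \<partial>(PiM {..n} (\<lambda>_. P)))"

end

theory Submission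
  imports Defs
begin

(* Fix the data and let c_k be the probability, over the randomness of M, that the prediction set
   built from the first k points covers the test point.  Rejecting whenever the label is not covered
   is a test between the outputs on the adjacent datasets D_{n+1} and D_n, with type I error
   1 - c_{n+1} and type II error c_n; so f-DP gives f (1 - c_{n+1}) <= c_n pointwise.  Averaging
   over the data, a supporting line of the convex function f at alpha, whose slope is nonpositive
   because f is non-increasing, turns E[1 - c_{n+1}] <= alpha into f alpha <= E[c_n]. *)

lemma (in prob_space) convex_antimono_le_expectation:
  fixes f :: "real \<Rightarrow> real" and X Y :: "'a \<Rightarrow> real"
  assumes f: "convex_on {l..u} f" "antimono_on {l..u} f"
    and a: "l < a" "a < u"
    and X: "integrable M X" "\<And>\<omega>. \<omega> \<in> space M \<Longrightarrow> X \<omega> \<in> {l..u}" "expectation X \<le> a"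
    and Y: "integrable M Y" "\<And>\<omega>. \<omega> \<in> space M \<Longrightarrow> f (X \<omega>) \<le> Y \<omega>"
  shows "f a \<le> expectation Y"
proof -
  define s where "s = Inf ((\<lambda>t. (f a - f t) / (a - t)) ` ({a<..} \<inter> {l..u}))"
  have support: "f a + s * (x - a) \<le> f x" if "x \<in> {l..u}" for x
    unfolding s_def using convex_le_Inf_differential[OF f(1), of a x] a that by simp
  have "s * (u - a) \<le> 0"
    using support[of u] monotone_onD[OF f(2), of a u] a by simp
  then have s: "s \<le> 0"
    using a by (simp add: mult_le_0_iff)
  have "f a \<le> f a + s * (expectation X - a)"
    using s X(3) by (simp add: mult_nonpos_nonpos)
  also have "\<dots> = expectation (\<lambda>\<omega>. f a + s * (X \<omega> - a))"
    using X(1) prob_space by (simp add: algebra_simps)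
  also have "\<dots> \<le> expectation Y"
  proof (rule integral_mono[OF _ Y(1)])
    show "integrable M (\<lambda>\<omega>. f a + s * (X \<omega> - a))"
      using X(1) by simp
    show "f a + s * (X \<omega> - a) \<le> Y \<omega>" if "\<omega> \<in> space M" for \<omega>
      using support[OF X(2)] Y(2) that by fastforce
  qed
  finally show ?thesis .
qed

lemma tradeoff_le_test:
  fixes \<phi> :: "'a \<Rightarrow> real"
  assumes Q: "prob_space Q" "sets Q = sets P"
    and \<phi>: "\<phi> \<in> borel_measurable P" "\<And>x. x \<in> space P \<Longrightarrow> 0 \<le> \<phi> x \<and> \<phi> x \<le> 1"
      "(\<integral>x. \<phi> x \<partial>P) \<le> \<alpha>"
  shows "tradeoff P Q \<alpha> \<le> 1 - (\<integral>x. \<phi> x \<partial>Q)"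
proof -
  interpret Q: prob_space Q by (rule Q(1))
  let ?errors = "(\<lambda>\<psi>. 1 - (\<integral>x. \<psi> x \<partial>Q)) `
    {\<psi> \<in> borel_measurable P. (\<forall>x\<in>space P. 0 \<le> \<psi> x \<and> \<psi> x \<le> 1) \<and> (\<integral>x. \<psi> x \<partial>P) \<le> \<alpha>}"
  have "(\<integral>x. \<psi> x \<partial>Q) \<le> 1"
    if "\<psi> \<in> borel_measurable P" "\<forall>x\<in>space P. 0 \<le> \<psi> x \<and> \<psi> x \<le> 1" for \<psi> :: "'a \<Rightarrow> real"
  proof (rule Q.integral_le_const)
    have "\<psi> \<in> borel_measurable Q" "space Q = space P"
      using that(1) sets_eq_imp_space_eq[OF Q(2)]
      by (simp_all add: measurable_cong_sets[OF Q(2) refl])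
    then show "integrable Q \<psi>" "AE x in Q. \<psi> x \<le> 1"
      using that(2) by (auto intro!: Q.integrable_const_bound[where B=1])
  qed
  then have "bdd_below ?errors"
    by (intro bdd_belowI[where m=0]) force
  moreover have "1 - (\<integral>x. \<phi> x \<partial>Q) \<in> ?errors"
    using \<phi> by blast
  ultimately show ?thesis
    unfolding tradeoff_def by (rule cInf_lower[rotated])
qed

lemma tradeoff_le_measure:
  assumes P: "prob_space P" and Q: "prob_space Q" "sets Q = sets P" and A: "A \<in> sets P"
  shows "tradeoff P Q (1 - measure P A) \<le> measure Q A"
proof -
  have A': "A \<in> sets Q"
    using A Q(2) by simp
  have "tradeoff P Q (1 - measure P A) \<le> 1 - (\<integral>x. indicator (space P - A) x \<partial>Q)"
  proof (rule tradeoff_le_test[OF Q])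
    show "indicator (space P - A) \<in> borel_measurable P"
      using A by (intro borel_measurable_indicator sets.compl_sets)
    show "(\<integral>x. indicator (space P - A) x \<partial>P) \<le> 1 - measure P A"
      using A by (simp add: prob_space.prob_compl[OF P])
  qed (simp add: indicator_def)
  also have "\<dots> = measure Q A"
    using prob_space.prob_compl[OF Q(1) A'] A' sets_eq_imp_space_eq[OF Q(2)]
    by (simp add: Int_absorb2)
  finally show ?thesis .
qed

lemma adjacent_snoc: "adjacent (D @ [z]) D"
  unfolding adjacent_def remove_one_def by (intro disjI1 exI[of _ "length D"]) simp

lemma f_DP_measure_ge:
  assumes DP: "f_DP Z f M" and D: "set D \<subseteq> space Z" "set D' \<subseteq> space Z" "adjacent D D'"
    and M: "prob_space (M D)" "prob_space (M D')" "sets (M D') = sets (M D)"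
    and A: "A \<in> sets (M D)"
  shows "f (1 - measure (M D) A) \<le> measure (M D') A"
proof -
  have "1 - measure (M D) A \<in> {0..1}"
    using prob_space.prob_le_1[OF M(1)] by simp
  then have "f (1 - measure (M D) A) \<le> tradeoff (M D) (M D') (1 - measure (M D) A)"
    using DP D unfolding f_DP_def by simp
  also have "\<dots> \<le> measure (M D') A"
    by (rule tradeoff_le_measure[OF M A])
  finally show ?thesis .
qed

definition covering_outputs :: "'o measure \<Rightarrow> ('o \<Rightarrow> 'x \<Rightarrow> 'y set) \<Rightarrow> 'x \<times> 'y \<Rightarrow> 'o set" where
  "covering_outputs Out C z = {r \<in> space Out. snd z \<in> C r (fst z)}"

lemma sets_covering_outputs:
  assumes C_meas: "{(r, z). snd z \<in> C r (fst z)} \<inter> space (Out \<Otimes>\<^sub>M P) \<in> sets (Out \<Otimes>\<^sub>M P)"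
    and z: "z \<in> space P"
  shows "covering_outputs Out C z \<in> sets Out"
proof -
  have "covering_outputs Out C z = (\<lambda>r. (r, z)) -` ({(r, z). snd z \<in> C r (fst z)} \<inter> space (Out \<Otimes>\<^sub>M P))"
    using z by (auto simp: covering_outputs_def space_pair_measure)
  then show ?thesis
    using sets_Pair2[OF C_meas] by simp
qed

lemma measurable_measure_covering_outputs:
  fixes P :: "('x \<times> 'y) measure"
  assumes M_meas: "(\<lambda>\<omega>. M (map \<omega> [0..<k])) \<in> PiM {..<k} (\<lambda>_. P) \<rightarrow>\<^sub>M prob_algebra Out"
    and C_meas: "{(r, z). snd z \<in> C r (fst z)} \<inter> space (Out \<Otimes>\<^sub>M P) \<in> sets (Out \<Otimes>\<^sub>M P)"
    and I: "{..<k} \<subseteq> I" "n \<in> I"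
  shows "(\<lambda>\<omega>. measure (M (map \<omega> [0..<k])) (covering_outputs Out C (\<omega> n)))
    \<in> borel_measurable (PiM I (\<lambda>_. P))"
proof (rule measure_measurable_prob_algebra2)
  have "(\<lambda>\<omega>. M (map (restrict \<omega> {..<k}) [0..<k])) \<in> PiM I (\<lambda>_. P) \<rightarrow>\<^sub>M prob_algebra Out"
    using measurable_restrict_subset[OF I(1)] M_meas by (rule measurable_compose)
  moreover have "map (restrict \<omega> {..<k}) [0..<k] = map \<omega> [0..<k]" for \<omega> :: "nat \<Rightarrow> 'x \<times> 'y"
    by (rule map_cong) auto
  ultimately show "(\<lambda>\<omega>. M (map \<omega> [0..<k])) \<in> PiM I (\<lambda>_. P) \<rightarrow>\<^sub>M prob_algebra Out"
    by simp
  have swap: "(\<lambda>x. (snd x, fst x n)) \<in> PiM I (\<lambda>_. P) \<Otimes>\<^sub>M Out \<rightarrow>\<^sub>M Out \<Otimes>\<^sub>M P"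
    using I(2) by measurable
  have "Sigma (space (PiM I (\<lambda>_. P))) (\<lambda>\<omega>. covering_outputs Out C (\<omega> n))
      = (\<lambda>x. (snd x, fst x n)) -` ({(r, z). snd z \<in> C r (fst z)} \<inter> space (Out \<Otimes>\<^sub>M P))
        \<inter> space (PiM I (\<lambda>_. P) \<Otimes>\<^sub>M Out)"
    using I(2) by (auto simp: covering_outputs_def space_pair_measure space_PiM PiE_iff)
  then show "Sigma (space (PiM I (\<lambda>_. P))) (\<lambda>\<omega>. covering_outputs Out C (\<omega> n))
      \<in> sets (PiM I (\<lambda>_. P) \<Otimes>\<^sub>M Out)"
    using measurable_sets[OF swap C_meas] by simp
qed

lemma set_map_prefix_subset_space:
  assumes "\<omega> \<in> space (PiM I (\<lambda>_. P))" "{..<k} \<subseteq> I"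
  shows "set (map \<omega> [0..<k]) \<subseteq> space P"
  using assms by (auto simp: space_PiM PiE_iff)

lemma coverage_eq_integral_covering_outputs:
  assumes M_sets: "\<And>D. set D \<subseteq> space P \<Longrightarrow> sets (M D) = sets Out" and k: "k \<le> Suc n"
  shows "coverage P M C n k
    = (\<integral>\<omega>. measure (M (map \<omega> [0..<k])) (covering_outputs Out C (\<omega> n)) \<partial>PiM {..n} (\<lambda>_. P))"
  unfolding coverage_def covering_outputs_def
proof (intro Bochner_Integration.integral_cong refl)
  fix \<omega> assume "\<omega> \<in> space (PiM {..n} (\<lambda>_. P))"
  then have "space (M (map \<omega> [0..<k])) = space Out"
    using k by (intro sets_eq_imp_space_eq M_sets set_map_prefix_subset_space) auto
  then show "\<P>(r in M (map \<omega> [0..<k]). snd (\<omega> n) \<in> C r (fst (\<omega> n)))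
      = measure (M (map \<omega> [0..<k])) {r \<in> space Out. snd (\<omega> n) \<in> C r (fst (\<omega> n))}"
    by simp
qed

lemma integrable_measure_covering_outputs:
  fixes P :: "('x \<times> 'y) measure"
  assumes P: "prob_space P"
    and M_prob: "\<And>D. set D \<subseteq> space P \<Longrightarrow> prob_space (M D)"
    and M_meas: "(\<lambda>\<omega>. M (map \<omega> [0..<k])) \<in> PiM {..<k} (\<lambda>_. P) \<rightarrow>\<^sub>M prob_algebra Out"
    and C_meas: "{(r, z). snd z \<in> C r (fst z)} \<inter> space (Out \<Otimes>\<^sub>M P) \<in> sets (Out \<Otimes>\<^sub>M P)"
    and k: "k \<le> Suc n"
  shows "integrable (PiM {..n} (\<lambda>_. P))
    (\<lambda>\<omega>. measure (M (map \<omega> [0..<k])) (covering_outputs Out C (\<omega> n)))"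
proof -
  interpret Pi: prob_space "PiM {..n} (\<lambda>_. P)"
    using P by (intro prob_space_PiM) auto
  have "prob_space (M (map \<omega> [0..<k]))" if "\<omega> \<in> space (PiM {..n} (\<lambda>_. P))" for \<omega>
    using that k by (intro M_prob set_map_prefix_subset_space) auto
  then show ?thesis
    using k
    by (intro Pi.integrable_const_bound[where B=1] measurable_measure_covering_outputs[OF M_meas C_meas])
      (auto intro!: prob_space.prob_le_1)
qed

lemma f_DP_measure_covering_outputs_snoc:
  assumes DP: "f_DP P f M"
    and M_prob: "\<And>D. set D \<subseteq> space P \<Longrightarrow> prob_space (M D) \<and> sets (M D) = sets Out"
    and C_meas: "{(r, z). snd z \<in> C r (fst z)} \<inter> space (Out \<Otimes>\<^sub>M P) \<in> sets (Out \<Otimes>\<^sub>M P)"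
    and D: "set D \<subseteq> space P" and z: "z \<in> space P"
  shows "f (1 - measure (M (D @ [z])) (covering_outputs Out C z))
    \<le> measure (M D) (covering_outputs Out C z)"
proof (rule f_DP_measure_ge[OF DP _ D adjacent_snoc])
  show "set (D @ [z]) \<subseteq> space P"
    using D z by simp
  then show "prob_space (M (D @ [z]))" "prob_space (M D)" "sets (M D) = sets (M (D @ [z]))"
      "covering_outputs Out C z \<in> sets (M (D @ [z]))"
    using M_prob[of "D @ [z]"] M_prob[OF D] sets_covering_outputs[OF C_meas z] by simp_all
qed

theorem theorem2:
  fixes f :: "real \<Rightarrow> real" and \<alpha> :: real and n :: nat
    and MX :: "'x measure" and MY :: "'y measure" and P :: "('x \<times> 'y) measure"
    and Out :: "'o measure" and M :: "('x \<times> 'y) list \<Rightarrow> 'o measure"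
    and C :: "'o \<Rightarrow> 'x \<Rightarrow> 'y set"
  assumes f: "is_tradeoff_fun f"
    and \<alpha>: "0 < \<alpha>" "\<alpha> < 1"
    and P: "prob_space P" "sets P = sets (MX \<Otimes>\<^sub>M MY)"
    and M_prob: "\<And>D. set D \<subseteq> space P \<Longrightarrow> prob_space (M D) \<and> sets (M D) = sets Out"
    and M_meas: "\<And>k. (\<lambda>\<omega>. M (map \<omega> [0..<k])) \<in> PiM {..<k} (\<lambda>_. P) \<rightarrow>\<^sub>M prob_algebra Out"
    and M_DP: "f_DP P f M"
    and C_sets: "\<And>r x. r \<in> space Out \<Longrightarrow> x \<in> space MX \<Longrightarrow> C r x \<in> sets MY"
    and C_meas: "{(r, z). snd z \<in> C r (fst z)} \<inter> space (Out \<Otimes>\<^sub>M P) \<in> sets (Out \<Otimes>\<^sub>M P)"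
    and cov: "coverage P M C n (Suc n) \<ge> 1 - \<alpha>"
  shows "coverage P M C n n \<ge> f \<alpha>"
proof -
  let ?Pi = "PiM {..n} (\<lambda>_. P)"
  define cv where "cv k \<omega> = measure (M (map \<omega> [0..<k])) (covering_outputs Out C (\<omega> n))" for k \<omega>
  interpret Pi: prob_space ?Pi
    using P(1) by (intro prob_space_PiM) auto
  have cv_01: "cv k \<omega> \<in> {0..1}" if "\<omega> \<in> space ?Pi" "k \<le> Suc n" for \<omega> k
  proof -
    have "{..<k} \<subseteq> {..n}"
      using that(2) by auto
    then have "prob_space (M (map \<omega> [0..<k]))"
      using M_prob[OF set_map_prefix_subset_space[OF that(1)]] by blast
    then show ?thesis
      by (simp add: cv_def prob_space.prob_le_1)
  qed
  have cv_int: "integrable ?Pi (cv k)" if "k \<le> Suc n" for k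
    unfolding cv_def using M_prob
    by (intro integrable_measure_covering_outputs[OF P(1) _ M_meas C_meas that]) blast
  have cov_eq: "coverage P M C n k = Pi.expectation (cv k)" if "k \<le> Suc n" for k
    unfolding cv_def using M_prob that by (intro coverage_eq_integral_covering_outputs) auto
  have DP: "f (1 - cv (Suc n) \<omega>) \<le> cv n \<omega>" if "\<omega> \<in> space ?Pi" for \<omega>
    unfolding cv_def using that
    by (auto intro!: f_DP_measure_covering_outputs_snoc[OF M_DP M_prob C_meas] simp: space_PiM PiE_iff)
  have "f \<alpha> \<le> Pi.expectation (cv n)"
  proof (rule Pi.convex_antimono_le_expectation[where f = f and l = 0 and u = 1
        and X = "\<lambda>\<omega>. 1 - cv (Suc n) \<omega>"])
    show "convex_on {0..1} f" "antimono_on {0..1} f"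
      using f unfolding is_tradeoff_fun_def monotone_on_def by auto
    show "Pi.expectation (\<lambda>\<omega>. 1 - cv (Suc n) \<omega>) \<le> \<alpha>"
      using cov cov_eq[of "Suc n"] cv_int[of "Suc n"] by (simp add: Pi.prob_space)
  qed (use \<alpha> cv_int cv_01 DP in auto)
  then show ?thesis
    using cov_eq[of n] by simp
qed

end
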